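(* Let $f_1,f_2,\ldots$ be a sequence of complex polynomials converging uniformly on every compact subset of $\mathbb{C}$ to a polynomial $f\in\mathbb{C}[X]$ which has no double roots. Then there exist $m_0$ and $\rho^{(0)}\in\mathbb{C}$ such that $\rho^{(0)}$ satisfies the converging initial condition for $f_m$ for every $m>m_0$.
   Context: A complex number $\zeta$ satisfies the converging initial condition for a polynomial $g$ if: (1) there is an open convex set $D\subseteq\mathbb{C}$ with $\zeta\in D$ and a real $L>0$ such that $|g'(z_1)-g'(z_2)|\le L|z_1-z_2|$ for all $z_1,z_2\in D$; (2) $g'(\zeta)\ne0$ and there are reals $a,b$ with $|g'(\zeta)^{-1}|\le a$, $|g'(\zeta)^{-1}g(\zeta)|\le b$ and $h=abL\le\frac12$; (3) the closed disc $\overline U=\{z\in\mathbb{C}:|z-\zeta|\le t^*\}$ with $t^*=(1-\sqrt{1-2h})/(aL)$ is contained in $D$. *)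

theory Defs
  imports "HOL-Analysis.Analysis" "HOL-Computational_Algebra.Polynomial"
begin

text \<open>Converging initial condition (Kantorovich-type condition for Newton's method)
  of a point zeta for a complex polynomial g; g' is the formal derivative pderiv g.\<close>
definition converging_initial_condition :: "complex poly \<Rightarrow> complex \<Rightarrow> bool" where
  "converging_initial_condition g \<zeta> \<longleftrightarrow>
    (\<exists>D L a b h tstar.
       open D \<and> convex D \<and> \<zeta> \<in> D \<and> (L::real) > 0 \<and>
       (\<forall>z1\<in>D. \<forall>z2\<in>D. cmod (poly (pderiv g) z1 - poly (pderiv g) z2) \<le> L * cmod (z1 - z2)) \<and>
       poly (pderiv g) \<zeta> \<noteq> 0 \<and>
       cmod (inverse (poly (pderiv g) \<zeta>)) \<le> (a::real) \<and>
       cmod (inverse (poly (pderiv g) \<zeta>) * poly g \<zeta>) \<le> (b::real) \<and>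
       h = a * b * L \<and> h \<le> 1/2 \<and>
       tstar = (1 - sqrt (1 - 2 * h)) / (a * L) \<and>
       cball \<zeta> tstar \<subseteq> D)"

end

theory Submission
  imports
    Defs
    "HOL-Computational_Algebra.Fundamental_Theorem_Algebra"
    "HOL-Complex_Analysis.Cauchy_Integral_Formula"
begin

text \<open>Take a root \<open>\<rho>\<close> of \<open>f\<close>; it is simple, so \<open>f'(\<rho>) \<noteq> 0\<close>. By the Cauchy estimates,
  locally uniform convergence of \<open>f\<^sub>m\<close> to \<open>f\<close> gives \<open>f\<^sub>m'(\<rho>) \<rightarrow> f'(\<rho>)\<close> and a uniform
  bound on \<open>f\<^sub>m''\<close> near \<open>\<rho>\<close>, i.e. a common Lipschitz constant \<open>L\<close> for the \<open>f\<^sub>m'\<close>.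
  Hence \<open>|f\<^sub>m'(\<rho>)\<^sup>-\<^sup>1|\<close> stays below a fixed \<open>a\<close> while \<open>|f\<^sub>m'(\<rho>)\<^sup>-\<^sup>1 f\<^sub>m(\<rho>)| \<rightarrow> 0\<close>, so eventually
  it is below any \<open>b\<close> with \<open>abL \<le> 1/2\<close>; the Kantorovich radius \<open>t\<^sup>*\<close> is at most \<open>2b\<close>,
  so the disc \<open>cball \<rho> t\<^sup>*\<close> fits into a fixed neighbourhood of \<open>\<rho>\<close>.\<close>

lemma kantorovich_radius_le:
  assumes "0 \<le> h" "h \<le> 1/2"
  shows "1 - sqrt (1 - 2 * h) \<le> 2 * h"
proof -
  have "(1 - 2 * h)\<^sup>2 \<le> 1 - 2 * h"
    using assms by (simp add: power2_eq_square mult_left_le)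
  then have "1 - 2 * h \<le> sqrt (1 - 2 * h)"
    by (rule real_le_rsqrt)
  then show ?thesis by linarith
qed

lemma converging_initial_conditionI:
  assumes "open D" "convex D" "\<zeta> \<in> D" "L > 0"
    and "\<And>z1 z2. z1 \<in> D \<Longrightarrow> z2 \<in> D \<Longrightarrow>
      cmod (poly (pderiv g) z1 - poly (pderiv g) z2) \<le> L * cmod (z1 - z2)"
    and nonzero: "poly (pderiv g) \<zeta> \<noteq> 0"
    and a: "cmod (inverse (poly (pderiv g) \<zeta>)) \<le> a"
    and b: "cmod (inverse (poly (pderiv g) \<zeta>) * poly g \<zeta>) \<le> b"
    and h: "a * b * L \<le> 1/2"
    and disc: "cball \<zeta> (2 * b) \<subseteq> D"
  shows "converging_initial_condition g \<zeta>"
proof -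
  have "0 < cmod (inverse (poly (pderiv g) \<zeta>))"
    using nonzero by simp
  with a have "a > 0"
    by linarith
  moreover have "b \<ge> 0"
    using b norm_ge_zero order_trans by blast
  ultimately have "1 - sqrt (1 - 2 * (a * b * L)) \<le> 2 * (a * b * L)"
    using h \<open>L > 0\<close> by (intro kantorovich_radius_le) auto
  then have "(1 - sqrt (1 - 2 * (a * b * L))) / (a * L) \<le> 2 * b"
    using \<open>a > 0\<close> \<open>L > 0\<close> by (simp add: divide_le_eq mult_ac)
  then have "cball \<zeta> ((1 - sqrt (1 - 2 * (a * b * L))) / (a * L)) \<subseteq> D"
    using disc by (meson cball_subset_cball_iff order_trans order_refl)
  then show ?thesis
    unfolding converging_initial_condition_def
    using assms by blast
qed

lemma higher_deriv_poly: "(deriv ^^ n) (poly p) = poly ((pderiv ^^ n) p)"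
proof (induction n)
  case (Suc n)
  have "deriv (poly q) = poly (pderiv q)" for q :: "'a::{comm_ring_1,real_normed_field} poly"
    by (rule ext, rule DERIV_imp_deriv, rule poly_DERIV)
  with Suc show ?case by simp
qed simp

lemma norm_poly_higher_pderiv_le:
  fixes p :: "complex poly"
  assumes "0 < r" "0 < n" "\<And>z. z \<in> ball w r \<Longrightarrow> cmod (poly p z) < B"
  shows "cmod (poly ((pderiv ^^ n) p) w) \<le> fact n * B / r ^ n"
proof -
  have "cmod ((deriv ^^ n) (poly p) w) \<le> fact n * B / r ^ n"
    by (rule Cauchy_higher_deriv_bound[where y = 0])
       (use assms in \<open>auto intro!: holomorphic_intros continuous_intros\<close>)
  then show ?thesis
    by (simp add: higher_deriv_poly)
qed

lemma poly_pderiv_lipschitz_on_ball: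
  fixes p :: "complex poly"
  assumes "0 < r" "\<And>z. z \<in> ball w (2 * r) \<Longrightarrow> cmod (poly p z) < B"
    and "z1 \<in> ball w r" "z2 \<in> ball w r"
  shows "cmod (poly (pderiv p) z1 - poly (pderiv p) z2) \<le> 2 * B / r\<^sup>2 * cmod (z1 - z2)"
proof (rule field_differentiable_bound[OF convex_ball _ _ assms(3,4)])
  fix u assume u: "u \<in> ball w r"
  show "(poly (pderiv p) has_field_derivative poly (pderiv (pderiv p)) u) (at u within ball w r)"
    by (rule DERIV_subset[OF poly_DERIV]) auto
  have "ball u r \<subseteq> ball w (2 * r)"
    using u by (intro subsetI) metric
  then have "cmod (poly ((pderiv ^^ 2) p) u) \<le> fact 2 * B / r ^ 2"
    using assms(1,2) by (intro norm_poly_higher_pderiv_le) auto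
  then show "cmod (poly (pderiv (pderiv p)) u) \<le> 2 * B / r\<^sup>2"
    by (simp add: numeral_2_eq_2)
qed

lemma eventually_poly_pderiv_lipschitz:
  fixes fs :: "'i \<Rightarrow> complex poly"
  assumes ulim: "uniform_limit (cball w (2 * r)) (\<lambda>m z. poly (fs m) z) (\<lambda>z. poly f z) F"
    and "0 < r"
  obtains L where "L > 0"
    "eventually (\<lambda>m. \<forall>z1\<in>ball w r. \<forall>z2\<in>ball w r.
       cmod (poly (pderiv (fs m)) z1 - poly (pderiv (fs m)) z2) \<le> L * cmod (z1 - z2)) F"
proof -
  have "bounded (poly f ` cball w (2 * r))"
    by (intro compact_imp_bounded compact_continuous_image continuous_intros compact_cball)
  then obtain B where B: "B > 0" "\<And>z. z \<in> cball w (2 * r) \<Longrightarrow> cmod (poly f z) \<le> B"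
    by (auto simp: bounded_pos)
  have "eventually (\<lambda>m. \<forall>z\<in>cball w (2 * r). dist (poly (fs m) z) (poly f z) < 1) F"
    using ulim by (simp add: uniform_limit_iff)
  then have "eventually (\<lambda>m. \<forall>z\<in>ball w (2 * r). cmod (poly (fs m) z) < B + 1) F"
  proof eventually_elim
    case (elim m)
    show ?case
    proof
      fix z assume "z \<in> ball w (2 * r)"
      then have z: "z \<in> cball w (2 * r)"
        by simp
      then have "cmod (poly (fs m) z - poly f z) < 1"
        using elim by (simp add: dist_norm)
      then show "cmod (poly (fs m) z) < B + 1"
        using B(2)[OF z] norm_triangle_ineq2[of "poly (fs m) z" "poly f z"] by linarith
    qed
  qed
  then have "eventually (\<lambda>m. \<forall>z1\<in>ball w r. \<forall>z2\<in>ball w r.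
       cmod (poly (pderiv (fs m)) z1 - poly (pderiv (fs m)) z2) \<le> 2 * (B + 1) / r\<^sup>2 * cmod (z1 - z2)) F"
    by eventually_elim (use \<open>0 < r\<close> in \<open>blast intro: poly_pderiv_lipschitz_on_ball\<close>)
  moreover have "2 * (B + 1) / r\<^sup>2 > 0"
    using B \<open>0 < r\<close> by simp
  ultimately show thesis
    using that by blast
qed

lemma tendsto_poly_pderiv_uniform_limit:
  fixes fs :: "'i \<Rightarrow> complex poly"
  assumes ulim: "uniform_limit (cball w r) (\<lambda>m z. poly (fs m) z) (\<lambda>z. poly f z) F"
    and "F \<noteq> bot" "0 < r"
  shows "((\<lambda>m. poly (pderiv (fs m)) w) \<longlongrightarrow> poly (pderiv f) w) F"
proof -
  obtain g' where "\<And>u. u \<in> ball w r \<Longrightarrow>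
      (poly f has_field_derivative g' u) (at u) \<and> ((\<lambda>m. poly (pderiv (fs m)) u) \<longlongrightarrow> g' u) F"
    by (rule has_complex_derivative_uniform_limit[where f' = "\<lambda>m. poly (pderiv (fs m))", OF _ ulim])
       (use assms in \<open>auto intro!: always_eventually continuous_on_poly[OF continuous_on_id] poly_DERIV\<close>)
  then have "(poly f has_field_derivative g' w) (at w)" "((\<lambda>m. poly (pderiv (fs m)) w) \<longlongrightarrow> g' w) F"
    using \<open>0 < r\<close> by auto
  moreover have "g' w = poly (pderiv f) w"
    using DERIV_unique[OF calculation(1) poly_DERIV] .
  ultimately show ?thesis by simp
qed

lemma eventually_converging_initial_condition:
  fixes gs :: "'i \<Rightarrow> complex poly"
  assumes "0 < r" "L > 0"
    and lipschitz: "eventually (\<lambda>m. \<forall>z1\<in>ball \<zeta> r. \<forall>z2\<in>ball \<zeta> r.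
      cmod (poly (pderiv (gs m)) z1 - poly (pderiv (gs m)) z2) \<le> L * cmod (z1 - z2)) F"
    and deriv_lim: "((\<lambda>m. poly (pderiv (gs m)) \<zeta>) \<longlongrightarrow> c) F" "c \<noteq> 0"
    and value_lim: "((\<lambda>m. poly (gs m) \<zeta>) \<longlongrightarrow> 0) F"
  shows "eventually (\<lambda>m. converging_initial_condition (gs m) \<zeta>) F"
proof -
  have inverse_lim: "((\<lambda>m. inverse (poly (pderiv (gs m)) \<zeta>)) \<longlongrightarrow> inverse c) F"
    using deriv_lim by (rule tendsto_inverse)
  have newton_step_lim: "((\<lambda>m. inverse (poly (pderiv (gs m)) \<zeta>) * poly (gs m) \<zeta>) \<longlongrightarrow> 0) F"
    using tendsto_mult[OF inverse_lim value_lim] by simp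
  define a where "a = cmod (inverse c) + 1"
  define b where "b = min (r / 4) (1 / (2 * a * L))"
  have "a > 0"
    unfolding a_def by (intro add_nonneg_pos) auto
  then have "b > 0"
    using assms(1,2) by (simp add: b_def)
  have "a * b * L = a * L * b"
    by (simp add: mult_ac)
  also have "\<dots> \<le> a * L * (1 / (2 * a * L))"
    using \<open>a > 0\<close> \<open>L > 0\<close> by (intro mult_left_mono) (simp_all add: b_def)
  also have "\<dots> = 1/2"
    using \<open>a > 0\<close> \<open>L > 0\<close> by simp
  finally have "a * b * L \<le> 1/2" .
  have "cball \<zeta> (2 * b) \<subseteq> ball \<zeta> r"
    using \<open>0 < r\<close> by (auto simp: b_def)
  have "eventually (\<lambda>m. cmod (inverse (poly (pderiv (gs m)) \<zeta>)) < a) F"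
    using order_tendstoD(2)[OF tendsto_norm[OF inverse_lim]] by (simp add: a_def)
  moreover have "eventually (\<lambda>m. cmod (inverse (poly (pderiv (gs m)) \<zeta>) * poly (gs m) \<zeta>) < b) F"
    using order_tendstoD(2)[OF tendsto_norm[OF newton_step_lim]] \<open>b > 0\<close> by simp
  moreover note lipschitz tendsto_imp_eventually_ne[OF deriv_lim]
  ultimately show ?thesis
  proof eventually_elim
    case (elim m)
    show ?case
      by (rule converging_initial_conditionI[of "ball \<zeta> r" _ L])
         (use elim \<open>0 < r\<close> \<open>L > 0\<close> \<open>a * b * L \<le> 1/2\<close> \<open>cball \<zeta> (2 * b) \<subseteq> ball \<zeta> r\<close> in auto)
  qed
qed

theorem lemma7:
  fixes fs :: "nat \<Rightarrow> complex poly" and f :: "complex poly"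
  assumes conv: "\<And>K. compact K \<Longrightarrow> uniform_limit K (\<lambda>m z. poly (fs m) z) (\<lambda>z. poly f z) sequentially"
    and simple: "\<And>z. poly f z = 0 \<Longrightarrow> poly (pderiv f) z \<noteq> 0"
    and nonconst: "degree f \<ge> 1"
  shows "\<exists>m0 (\<rho>0::complex). \<forall>m>m0. converging_initial_condition (fs m) \<rho>0"
proof -
  obtain \<rho> where root: "poly f \<rho> = 0"
    using Fundamental_Theorem_Algebra.fundamental_theorem_of_algebra nonconst constant_degree by force
  have ulim: "uniform_limit (cball \<rho> (2 * 1)) (\<lambda>m z. poly (fs m) z) (\<lambda>z. poly f z) sequentially"
    by (simp add: conv)
  obtain L where "L > 0" and lipschitz: "eventually (\<lambda>m. \<forall>z1\<in>ball \<rho> 1. \<forall>z2\<in>ball \<rho> 1.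
      cmod (poly (pderiv (fs m)) z1 - poly (pderiv (fs m)) z2) \<le> L * cmod (z1 - z2)) sequentially"
    using eventually_poly_pderiv_lipschitz[OF ulim] by auto
  have "((\<lambda>m. poly (pderiv (fs m)) \<rho>) \<longlongrightarrow> poly (pderiv f) \<rho>) sequentially"
    using ulim by (rule tendsto_poly_pderiv_uniform_limit) auto
  moreover have "((\<lambda>m. poly (fs m) \<rho>) \<longlongrightarrow> 0) sequentially"
    using tendsto_uniform_limitI[OF ulim, of \<rho>] root by simp
  ultimately have "eventually (\<lambda>m. converging_initial_condition (fs m) \<rho>) sequentially"
    using \<open>L > 0\<close> lipschitz simple[OF root] by (intro eventually_converging_initial_condition) auto
  then show ?thesis
    by (metis eventually_sequentially less_imp_le)
qed

end
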